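(* Let $\mathbf{X},\mathbf{Y},\mathbf{T}_1,\mathbf{T}_2$ be random variables on finite alphabets, with the joint law $p(\mathbf{X},\mathbf{Y})$ fixed and with the Markov structure described in the context. Fix Lagrange multipliers $\beta,\lambda,\gamma$ with $\beta>0$, $\lambda>0$, $\gamma\ge 0$. Consider the functional $$\mathcal{F}[p(\mathbf{T}_1|\mathbf{X}),p(\mathbf{T}_2|\mathbf{X})] = -I(\mathbf{Y};\mathbf{T}_1,\mathbf{T}_2)+\beta I(\mathbf{T}_1;\mathbf{X})+\lambda I(\mathbf{T}_2;\mathbf{X})+\gamma I(\mathbf{T}_1;\mathbf{T}_2),$$ to be minimized over the two conditional distributions $p(\mathbf{T}_1|\mathbf{X})$ and $p(\mathbf{T}_2|\mathbf{X})$, each ranging over conditional probability distributions. Then an optimal (minimizing) pair of conditional distributions, assumed to have all the probabilities below strictly positive, satisfies the following self-consistent equations for all $x,t_1,t_2$: $$p(t_1|x)=\frac{p(t_1)}{Z_1(x)}\exp\Big\{\frac{\gamma}{\beta}D_{KL}\big[p(\mathbf{T}_2|x)\,\|\,p(\mathbf{T}_2|t_1)\big]-\frac{1}{\beta}\sum_{t_2}p(t_2|x)\,D_{KL}\big[p(\mathbf{Y}|x)\,\|\,p(\mathbf{Y}|t_1,t_2)\big]\Big\},$$ $$p(t_2|x)=\frac{p(t_2)}{Z_2(x)}\exp\Big\{\frac{\gamma}{\lambda}D_{KL}\big[p(\mathbf{T}_1|x)\,\|\,p(\mathbf{T}_1|t_2)\big]-\frac{1}{\lambda}\sum_{t_1}p(t_1|x)\,D_{KL}\big[p(\mathbf{Y}|x)\,\|\,p(\mathbf{Y}|t_1,t_2)\big]\Big\},$$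 where $Z_1(x),Z_2(x)$ are normalizing constants making the right-hand sides probability distributions in $t_1$ (resp. $t_2$).
   Context: Standing assumptions: $\mathbf{T}_1$ and $\mathbf{T}_2$ are stochastic mappings of $\mathbf{X}$, given by conditional distributions $p(\mathbf{T}_1|\mathbf{X})$, $p(\mathbf{T}_2|\mathbf{X})$; the joint law factorizes as $p(x,y,t_1,t_2)=p(x)\,p(y|x)\,p(t_1|x)\,p(t_2|x)$ (so each of $\mathbf{T}_1$, $\mathbf{T}_2$, $\mathbf{Y}$ is conditionally independent of all the other variables given $\mathbf{X}$). All marginals and conditionals ($p(t_1)$, $p(t_2)$, $p(t_2|t_1)$, $p(t_1|t_2)$, $p(y|t_1,t_2)$) are those induced by this joint law. $D_{KL}$ denotes Kullback–Leibler divergence and $I(\cdot;\cdot)$ mutual information. The functional arises as the Lagrangian of the problem: maximize $I(\mathbf{Y};\mathbf{T}_1,\mathbf{T}_2)$ subject to $I(\mathbf{X};\mathbf{T}_1)\le r_1$, $I(\mathbf{X};\mathbf{T}_2)\le r_2$, $I(\mathbf{T}_1;\mathbf{T}_2)\le\epsilon$. *)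

theory Defs
  imports Complex_Main
begin

text \<open>Finite alphabets are modelled by finite types. Probabilities are real-valued
functions; logarithms are natural (consistent with exp in the self-consistent equations),
with the convention 0 log 0 = 0.\<close>

definition cond_dist :: "('a \<Rightarrow> 'b::finite \<Rightarrow> real) \<Rightarrow> bool" where
  "cond_dist q \<longleftrightarrow> (\<forall>a. (\<forall>b. 0 \<le> q a b) \<and> (\<Sum>b\<in>UNIV. q a b) = 1)"

definition mutual_info :: "('a::finite \<Rightarrow> 'b::finite \<Rightarrow> real) \<Rightarrow> real" where
  "mutual_info J = (\<Sum>a\<in>UNIV. \<Sum>b\<in>UNIV.
      if J a b = 0 then 0
      else J a b * ln (J a b / ((\<Sum>b'\<in>UNIV. J a b') * (\<Sum>a'\<in>UNIV. J a' b))))"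

definition KL :: "('a::finite \<Rightarrow> real) \<Rightarrow> ('a \<Rightarrow> real) \<Rightarrow> real" where
  "KL p q = (\<Sum>a\<in>UNIV. if p a = 0 then 0 else p a * ln (p a / q a))"

text \<open>Quantities induced by p(x,y), p(t1|x), p(t2|x) under
p(x,y,t1,t2) = p(x) p(y|x) p(t1|x) p(t2|x).\<close>

definition px :: "('x::finite \<Rightarrow> 'y::finite \<Rightarrow> real) \<Rightarrow> 'x \<Rightarrow> real" where
  "px pxy x = (\<Sum>y\<in>UNIV. pxy x y)"

definition py_x :: "('x::finite \<Rightarrow> 'y::finite \<Rightarrow> real) \<Rightarrow> 'x \<Rightarrow> 'y \<Rightarrow> real" where
  "py_x pxy x y = pxy x y / px pxy x"

definition pt :: "('x::finite \<Rightarrow> 'y::finite \<Rightarrow> real) \<Rightarrow> ('x \<Rightarrow> 't \<Rightarrow> real) \<Rightarrow> 't \<Rightarrow> real" where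
  "pt pxy q t = (\<Sum>x\<in>UNIV. px pxy x * q x t)"

definition pt1t2 :: "('x::finite \<Rightarrow> 'y::finite \<Rightarrow> real) \<Rightarrow> ('x \<Rightarrow> 't1 \<Rightarrow> real)
    \<Rightarrow> ('x \<Rightarrow> 't2 \<Rightarrow> real) \<Rightarrow> 't1 \<Rightarrow> 't2 \<Rightarrow> real" where
  "pt1t2 pxy q1 q2 t1 t2 = (\<Sum>x\<in>UNIV. px pxy x * q1 x t1 * q2 x t2)"

definition pyt :: "('x::finite \<Rightarrow> 'y::finite \<Rightarrow> real) \<Rightarrow> ('x \<Rightarrow> 't1 \<Rightarrow> real)
    \<Rightarrow> ('x \<Rightarrow> 't2 \<Rightarrow> real) \<Rightarrow> 'y \<Rightarrow> 't1 \<times> 't2 \<Rightarrow> real" where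
  "pyt pxy q1 q2 y t = (\<Sum>x\<in>UNIV. pxy x y * q1 x (fst t) * q2 x (snd t))"

definition pt2_t1 where
  "pt2_t1 pxy q1 q2 t1 t2 = pt1t2 pxy q1 q2 t1 t2 / pt pxy q1 t1"

definition pt1_t2 where
  "pt1_t2 pxy q1 q2 t2 t1 = pt1t2 pxy q1 q2 t1 t2 / pt pxy q2 t2"

definition py_t1t2 where
  "py_t1t2 pxy q1 q2 t1 t2 y = pyt pxy q1 q2 y (t1, t2) / pt1t2 pxy q1 q2 t1 t2"

definition IB_F :: "('x::finite \<Rightarrow> 'y::finite \<Rightarrow> real) \<Rightarrow> real \<Rightarrow> real \<Rightarrow> real
    \<Rightarrow> ('x \<Rightarrow> 't1::finite \<Rightarrow> real) \<Rightarrow> ('x \<Rightarrow> 't2::finite \<Rightarrow> real) \<Rightarrow> real" where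
  "IB_F pxy beta lam gam q1 q2 =
     - mutual_info (pyt pxy q1 q2)
     + beta * mutual_info (\<lambda>x t1. px pxy x * q1 x t1)
     + lam * mutual_info (\<lambda>x t2. px pxy x * q2 x t2)
     + gam * mutual_info (pt1t2 pxy q1 q2)"

definition E1 where
  "E1 pxy beta gam q1 q2 x t1 =
     gam / beta * KL (q2 x) (pt2_t1 pxy q1 q2 t1)
     - 1 / beta * (\<Sum>t2\<in>UNIV. q2 x t2 * KL (py_x pxy x) (py_t1t2 pxy q1 q2 t1 t2))"

definition E2 where
  "E2 pxy lam gam q1 q2 x t2 =
     gam / lam * KL (q1 x) (pt1_t2 pxy q1 q2 t2)
     - 1 / lam * (\<Sum>t1\<in>UNIV. q1 x t1 * KL (py_x pxy x) (py_t1t2 pxy q1 q2 t1 t2))"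

end

theory Submission
  imports Defs
begin

text \<open>A minimiser with strictly positive entries is a critical point of the functional in each
encoder separately. Moving one row of \<open>p(t\<^sub>1|x)\<close> along \<open>e\<^sub>a - e\<^sub>b\<close> keeps it a conditional
distribution, and every joint law entering the functional depends linearly on \<open>p(t\<^sub>1|x)\<close>. The
derivative of \<open>I(J\<^sub>0 + s J\<^sub>1)\<close> at \<open>s = 0\<close> is the pairing of \<open>J\<^sub>1\<close> with the pointwise mutual
information of \<open>J\<^sub>0\<close>, up to the total mass of \<open>J\<^sub>1\<close>, which vanishes for such directions. Hence the
gradient of the functional in \<open>p(t\<^sub>1|x)\<close> is constant in \<open>t\<^sub>1\<close>. Expanding the pointwise mutual
informations, it equals \<open>\<beta> p(x) (ln p(t\<^sub>1|x) - ln p(t\<^sub>1) - E\<^sub>1(x,t\<^sub>1))\<close> plus a term independent of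
\<open>t\<^sub>1\<close>; exponentiating and normalising gives the first equation. The second follows by the
symmetry of the functional under exchanging the two encoders.\<close>

section \<open>Derivative of mutual information along a line\<close>

definition pmi :: "('a::finite \<Rightarrow> 'b::finite \<Rightarrow> real) \<Rightarrow> 'a \<Rightarrow> 'b \<Rightarrow> real" where
  "pmi J a b = ln (J a b / ((\<Sum>b'\<in>UNIV. J a b') * (\<Sum>a'\<in>UNIV. J a' b)))"

lemma mutual_info_eq_sum_pmi: "mutual_info J = (\<Sum>a\<in>UNIV. \<Sum>b\<in>UNIV. J a b * pmi J a b)"
  unfolding mutual_info_def pmi_def by (intro sum.cong refl) simp

lemma KL_eq_sum: "KL p q = (\<Sum>a\<in>UNIV. p a * ln (p a / q a))"
  unfolding KL_def by (intro sum.cong refl) simp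

lemma eventually_pos_line:
  fixes j0 j1 :: real
  assumes "j0 > 0"
  shows "\<forall>\<^sub>F s in nhds 0. j0 + s * j1 > 0"
proof -
  have "((\<lambda>s. j0 + s * j1) \<longlongrightarrow> j0 + 0 * j1) (nhds 0)"
    by (intro tendsto_add tendsto_const tendsto_mult filterlim_ident)
  then show ?thesis
    using assms by (auto dest: order_tendstoD(1))
qed

lemma DERIV_mult_ln_ratio:
  fixes j0 j1 r0 r1 c0 c1 :: real
  assumes "0 \<le> j0" "j0 = 0 \<Longrightarrow> j1 = 0" "j0 \<le> r0" "j0 \<le> c0"
  shows "((\<lambda>s. (j0 + s * j1) * ln ((j0 + s * j1) / ((r0 + s * r1) * (c0 + s * c1))))
     has_real_derivative j1 * ln (j0 / (r0 * c0)) + j1 - j0 * r1 / r0 - j0 * c1 / c0) (at 0)"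
proof (cases "j0 = 0")
  case True
  then show ?thesis using assms by simp
next
  case False
  then have pos: "j0 > 0" "r0 > 0" "c0 > 0" using assms by auto
  have "\<forall>\<^sub>F s in nhds 0. j0 + s * j1 > 0 \<and> r0 + s * r1 > 0 \<and> c0 + s * c1 > 0"
    using pos by (intro eventually_conj eventually_pos_line)
  then have "\<forall>\<^sub>F s in nhds 0. (j0 + s * j1) * ln ((j0 + s * j1) / ((r0 + s * r1) * (c0 + s * c1)))
      = (j0 + s * j1) * (ln (j0 + s * j1) - ln (r0 + s * r1) - ln (c0 + s * c1))"
    by eventually_elim (simp add: ln_div ln_mult)
  moreover have "((\<lambda>s. (j0 + s * j1) * (ln (j0 + s * j1) - ln (r0 + s * r1) - ln (c0 + s * c1)))
      has_real_derivative j1 * ln (j0 / (r0 * c0)) + j1 - j0 * r1 / r0 - j0 * c1 / c0) (at 0)"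
    using pos by (auto intro!: derivative_eq_intros simp: ln_div ln_mult field_simps)
  ultimately show ?thesis
    by (subst DERIV_cong_ev[OF refl _ refl])
qed

lemma sum_mult_ratio_of_sums:
  fixes J0 J1 :: "'b::finite \<Rightarrow> real"
  assumes "\<And>b. 0 \<le> J0 b" and "\<And>b. J0 b = 0 \<Longrightarrow> J1 b = 0"
  shows "(\<Sum>b\<in>UNIV. J0 b * (\<Sum>b'\<in>UNIV. J1 b') / (\<Sum>b'\<in>UNIV. J0 b')) = (\<Sum>b\<in>UNIV. J1 b)"
proof (cases "(\<Sum>b'\<in>UNIV. J0 b') = 0")
  case True
  then show ?thesis using assms by (simp add: sum_nonneg_eq_0_iff)
next
  case False
  then show ?thesis by (simp flip: sum_divide_distrib sum_distrib_right)
qed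

lemma mutual_info_has_real_derivative:
  fixes J0 J1 :: "'a::finite \<Rightarrow> 'b::finite \<Rightarrow> real"
  assumes nonneg: "\<And>a b. 0 \<le> J0 a b" and supp: "\<And>a b. J0 a b = 0 \<Longrightarrow> J1 a b = 0"
  shows "((\<lambda>s. mutual_info (\<lambda>a b. J0 a b + s * J1 a b)) has_real_derivative
     (\<Sum>a\<in>UNIV. \<Sum>b\<in>UNIV. J1 a b * pmi J0 a b) - (\<Sum>a\<in>UNIV. \<Sum>b\<in>UNIV. J1 a b)) (at 0)"
proof -
  define R where "R J a = (\<Sum>b'\<in>UNIV. J a b')" for J :: "'a \<Rightarrow> 'b \<Rightarrow> real" and a
  define C where "C J b = (\<Sum>a'\<in>UNIV. J a' b)" for J :: "'a \<Rightarrow> 'b \<Rightarrow> real" and b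
  have "mutual_info (\<lambda>a b. J0 a b + s * J1 a b) = (\<Sum>a\<in>UNIV. \<Sum>b\<in>UNIV. (J0 a b + s * J1 a b)
      * ln ((J0 a b + s * J1 a b) / ((R J0 a + s * R J1 a) * (C J0 b + s * C J1 b))))" for s
    unfolding mutual_info_eq_sum_pmi pmi_def R_def C_def by (simp add: sum.distrib sum_distrib_left)
  moreover have "((\<lambda>s. \<Sum>a\<in>UNIV. \<Sum>b\<in>UNIV. (J0 a b + s * J1 a b)
      * ln ((J0 a b + s * J1 a b) / ((R J0 a + s * R J1 a) * (C J0 b + s * C J1 b)))) has_real_derivative
      (\<Sum>a\<in>UNIV. \<Sum>b\<in>UNIV. J1 a b * ln (J0 a b / (R J0 a * C J0 b)) + J1 a b
         - J0 a b * R J1 a / R J0 a - J0 a b * C J1 b / C J0 b)) (at 0)"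
    unfolding R_def C_def using nonneg supp
    by (intro DERIV_sum DERIV_mult_ln_ratio) (auto intro: member_le_sum)
  moreover have "(\<Sum>a\<in>UNIV. \<Sum>b\<in>UNIV. J0 a b * R J1 a / R J0 a) = (\<Sum>a\<in>UNIV. \<Sum>b\<in>UNIV. J1 a b)"
    unfolding R_def using nonneg supp by (intro sum.cong refl sum_mult_ratio_of_sums)
  moreover have "(\<Sum>a\<in>UNIV. \<Sum>b\<in>UNIV. J0 a b * C J1 b / C J0 b) = (\<Sum>a\<in>UNIV. \<Sum>b\<in>UNIV. J1 a b)"
    unfolding C_def using nonneg supp
    by (subst (1 2) sum.swap) (intro sum.cong refl sum_mult_ratio_of_sums)
  ultimately show ?thesis
    unfolding pmi_def R_def C_def by (simp add: sum.distrib sum_subtractf)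
qed

section \<open>Directional derivative in the first encoder\<close>

lemma sum_rotate3:
  "(\<Sum>a\<in>A. \<Sum>b\<in>B. \<Sum>c\<in>C. f a b c) = (\<Sum>c\<in>C. \<Sum>a\<in>A. \<Sum>b\<in>B. f a b c)"
  by (rule trans[OF sum.cong[OF refl sum.swap] sum.swap])

lemma sum_UNIV_pair:
  "(\<Sum>t\<in>(UNIV :: ('a::finite \<times> 'b::finite) set). f t) = (\<Sum>t1\<in>UNIV. \<Sum>t2\<in>UNIV. f (t1, t2))"
  by (simp add: sum.cartesian_product flip: UNIV_Times_UNIV)

lemma sum_sum_mult_row_eq_0:
  fixes d :: "'a::finite \<Rightarrow> 'b::finite \<Rightarrow> real"
  assumes "\<And>x. (\<Sum>t\<in>UNIV. d x t) = 0"
  shows "(\<Sum>x\<in>UNIV. \<Sum>t\<in>UNIV. d x t * c x) = 0"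
proof -
  have "(\<Sum>t\<in>UNIV. d x t * c x) = (\<Sum>t\<in>UNIV. d x t) * c x" for x
    by (simp add: sum_distrib_right)
  then show ?thesis using assms by simp
qed

lemma px_nonneg: "\<forall>x y. 0 \<le> pxy x y \<Longrightarrow> 0 \<le> px pxy x"
  unfolding px_def by (simp add: sum_nonneg)

lemma pyt_nonneg:
  assumes "\<forall>x y. 0 \<le> pxy x y" and "\<forall>x t1. 0 < q1 x t1" and "\<forall>x t2. 0 < q2 x t2"
  shows "0 \<le> pyt pxy q1 q2 y t"
  unfolding pyt_def using assms by (auto intro!: sum_nonneg simp: less_imp_le)

lemma pyt_eq_0_imp_pxy_eq_0:
  assumes "\<forall>x y. 0 \<le> pxy x y" and "\<forall>x t1. 0 < q1 x t1" and "\<forall>x t2. 0 < q2 x t2"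
    and "pyt pxy q1 q2 y t = 0"
  shows "pxy x y = 0"
proof -
  have "pxy x y * q1 x (fst t) * q2 x (snd t) = 0"
    using assms unfolding pyt_def by (subst (asm) sum_nonneg_eq_0_iff) (auto simp: less_imp_le)
  then show ?thesis
    using assms(2,3) by (simp add: less_imp_neq[symmetric])
qed

lemma pt1t2_nonneg:
  assumes "\<forall>x y. 0 \<le> pxy x y" and "\<forall>x t1. 0 < q1 x t1" and "\<forall>x t2. 0 < q2 x t2"
  shows "0 \<le> pt1t2 pxy q1 q2 t1 t2"
  unfolding pt1t2_def using assms px_nonneg[OF assms(1)] by (auto intro!: sum_nonneg simp: less_imp_le)

lemma pt1t2_eq_0_imp_px_eq_0:
  assumes "\<forall>x y. 0 \<le> pxy x y" and "\<forall>x t1. 0 < q1 x t1" and "\<forall>x t2. 0 < q2 x t2"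
    and "pt1t2 pxy q1 q2 t1 t2 = 0"
  shows "px pxy x = 0"
proof -
  have "px pxy x * q1 x t1 * q2 x t2 = 0"
    using assms px_nonneg[OF assms(1)] unfolding pt1t2_def
    by (subst (asm) sum_nonneg_eq_0_iff) (auto simp: less_imp_le)
  then show ?thesis
    using assms(2,3) by (simp add: less_imp_neq[symmetric])
qed

lemma pyt_add_scaled:
  "pyt pxy (\<lambda>x t. q x t + s * d x t) q2 = (\<lambda>y t. pyt pxy q q2 y t + s * pyt pxy d q2 y t)"
  unfolding pyt_def by (intro ext) (simp add: algebra_simps sum.distrib sum_distrib_left)

lemma pt1t2_add_scaled:
  "pt1t2 pxy (\<lambda>x t. q x t + s * d x t) q2 = (\<lambda>t1 t2. pt1t2 pxy q q2 t1 t2 + s * pt1t2 pxy d q2 t1 t2)"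
  unfolding pt1t2_def by (intro ext) (simp add: algebra_simps sum.distrib sum_distrib_left)

lemma sum_sum_pyt_mult:
  fixes d :: "'x::finite \<Rightarrow> 't1::finite \<Rightarrow> real" and q2 :: "'x \<Rightarrow> 't2::finite \<Rightarrow> real"
  shows "(\<Sum>y\<in>UNIV. \<Sum>t\<in>UNIV. pyt pxy d q2 y t * g y t)
     = (\<Sum>x\<in>UNIV. \<Sum>t1\<in>UNIV. d x t1 * (\<Sum>y\<in>UNIV. \<Sum>t2\<in>UNIV. pxy x y * q2 x t2 * g y (t1, t2)))"
proof -
  have "(\<Sum>y\<in>UNIV. \<Sum>t\<in>UNIV. pyt pxy d q2 y t * g y t)
      = (\<Sum>y\<in>UNIV. \<Sum>t1\<in>UNIV. \<Sum>t2\<in>UNIV. \<Sum>x\<in>UNIV. d x t1 * (pxy x y * q2 x t2 * g y (t1, t2)))"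
    unfolding pyt_def sum_UNIV_pair by (simp add: sum_distrib_left sum_distrib_right mult_ac)
  also have "\<dots> = (\<Sum>x\<in>UNIV. \<Sum>y\<in>UNIV. \<Sum>t1\<in>UNIV. \<Sum>t2\<in>UNIV. d x t1 * (pxy x y * q2 x t2 * g y (t1, t2)))"
    by (subst sum_rotate3) (rule sum.swap)
  also have "\<dots> = (\<Sum>x\<in>UNIV. \<Sum>t1\<in>UNIV. d x t1 * (\<Sum>y\<in>UNIV. \<Sum>t2\<in>UNIV. pxy x y * q2 x t2 * g y (t1, t2)))"
    by (subst (2) sum.swap) (simp add: sum_distrib_left)
  finally show ?thesis .
qed

lemma sum_sum_pt1t2_mult:
  fixes d :: "'x::finite \<Rightarrow> 't1::finite \<Rightarrow> real" and q2 :: "'x \<Rightarrow> 't2::finite \<Rightarrow> real"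
  shows "(\<Sum>t1\<in>UNIV. \<Sum>t2\<in>UNIV. pt1t2 pxy d q2 t1 t2 * g t1 t2)
     = (\<Sum>x\<in>UNIV. \<Sum>t1\<in>UNIV. d x t1 * (\<Sum>t2\<in>UNIV. px pxy x * q2 x t2 * g t1 t2))"
proof -
  have "(\<Sum>t1\<in>UNIV. \<Sum>t2\<in>UNIV. pt1t2 pxy d q2 t1 t2 * g t1 t2)
      = (\<Sum>t1\<in>UNIV. \<Sum>t2\<in>UNIV. \<Sum>x\<in>UNIV. d x t1 * (px pxy x * q2 x t2 * g t1 t2))"
    unfolding pt1t2_def by (simp add: sum_distrib_left sum_distrib_right mult_ac)
  also have "\<dots> = (\<Sum>x\<in>UNIV. \<Sum>t1\<in>UNIV. \<Sum>t2\<in>UNIV. d x t1 * (px pxy x * q2 x t2 * g t1 t2))"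
    by (rule sum_rotate3)
  finally show ?thesis by (simp add: sum_distrib_left)
qed

text \<open>This agrees with the partial derivatives of \<open>IB_F\<close> in \<open>q1\<close> up to a constant in each row,
which is invisible to directions whose rows sum to zero.\<close>

definition IB_grad1 :: "('x::finite \<Rightarrow> 'y::finite \<Rightarrow> real) \<Rightarrow> real \<Rightarrow> real
    \<Rightarrow> ('x \<Rightarrow> 't1::finite \<Rightarrow> real) \<Rightarrow> ('x \<Rightarrow> 't2::finite \<Rightarrow> real) \<Rightarrow> 'x \<Rightarrow> 't1 \<Rightarrow> real" where
  "IB_grad1 pxy beta gam q1 q2 x t1 =
     - (\<Sum>y\<in>UNIV. \<Sum>t2\<in>UNIV. pxy x y * q2 x t2 * pmi (pyt pxy q1 q2) y (t1, t2))
     + beta * (px pxy x * pmi (\<lambda>x t. px pxy x * q1 x t) x t1)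
     + gam * (\<Sum>t2\<in>UNIV. px pxy x * q2 x t2 * pmi (pt1t2 pxy q1 q2) t1 t2)"

lemma IB_F_has_directional_derivative_q1:
  assumes pxy_nonneg: "\<forall>x y. 0 \<le> pxy x y"
    and q1_pos: "\<forall>x t1. q1 x t1 > 0" and q2_pos: "\<forall>x t2. q2 x t2 > 0"
    and d_rows: "\<And>x. (\<Sum>t\<in>UNIV. d x t) = 0"
  shows "((\<lambda>s. IB_F pxy beta lam gam (\<lambda>x t. q1 x t + s * d x t) q2) has_real_derivative
      (\<Sum>x\<in>UNIV. \<Sum>t1\<in>UNIV. d x t1 * IB_grad1 pxy beta gam q1 q2 x t1)) (at 0)"
proof -
  have pyt_supp: "pyt pxy d q2 y t = 0" if "pyt pxy q1 q2 y t = 0" for y t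
    using pyt_eq_0_imp_pxy_eq_0[OF pxy_nonneg q1_pos q2_pos that] unfolding pyt_def by simp
  have pt1t2_supp: "pt1t2 pxy d q2 t1 t2 = 0" if "pt1t2 pxy q1 q2 t1 t2 = 0" for t1 t2
    using pt1t2_eq_0_imp_px_eq_0[OF pxy_nonneg q1_pos q2_pos that] unfolding pt1t2_def by simp
  have line: "IB_F pxy beta lam gam (\<lambda>x t. q1 x t + s * d x t) q2
      = - mutual_info (\<lambda>y t. pyt pxy q1 q2 y t + s * pyt pxy d q2 y t)
        + beta * mutual_info (\<lambda>x t. px pxy x * q1 x t + s * (px pxy x * d x t))
        + lam * mutual_info (\<lambda>x t2. px pxy x * q2 x t2)
        + gam * mutual_info (\<lambda>t1 t2. pt1t2 pxy q1 q2 t1 t2 + s * pt1t2 pxy d q2 t1 t2)" for s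
    unfolding IB_F_def pyt_add_scaled pt1t2_add_scaled by (simp add: algebra_simps)
  have "((\<lambda>s. IB_F pxy beta lam gam (\<lambda>x t. q1 x t + s * d x t) q2) has_real_derivative
      - ((\<Sum>y\<in>UNIV. \<Sum>t\<in>UNIV. pyt pxy d q2 y t * pmi (pyt pxy q1 q2) y t)
         - (\<Sum>y\<in>UNIV. \<Sum>t\<in>UNIV. pyt pxy d q2 y t))
      + beta * ((\<Sum>x\<in>UNIV. \<Sum>t\<in>UNIV. px pxy x * d x t * pmi (\<lambda>x t. px pxy x * q1 x t) x t)
         - (\<Sum>x\<in>UNIV. \<Sum>t\<in>UNIV. px pxy x * d x t))
      + lam * 0
      + gam * ((\<Sum>t1\<in>UNIV. \<Sum>t2\<in>UNIV. pt1t2 pxy d q2 t1 t2 * pmi (pt1t2 pxy q1 q2) t1 t2)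
         - (\<Sum>t1\<in>UNIV. \<Sum>t2\<in>UNIV. pt1t2 pxy d q2 t1 t2))) (at 0)"
    unfolding line
    using pyt_nonneg[OF pxy_nonneg q1_pos q2_pos] pyt_supp pt1t2_nonneg[OF pxy_nonneg q1_pos q2_pos]
      pt1t2_supp px_nonneg[OF pxy_nonneg] q1_pos
    by (intro DERIV_add DERIV_minus DERIV_cmult DERIV_const mutual_info_has_real_derivative)
      (auto simp: less_imp_le less_imp_neq[symmetric])
  moreover have "(\<Sum>y\<in>UNIV. \<Sum>t\<in>UNIV. pyt pxy d q2 y t) = 0"
    using sum_sum_pyt_mult[of pxy d q2 "\<lambda>_ _. 1"] d_rows by (simp add: sum_sum_mult_row_eq_0)
  moreover have "(\<Sum>t1\<in>UNIV. \<Sum>t2\<in>UNIV. pt1t2 pxy d q2 t1 t2) = 0"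
    using sum_sum_pt1t2_mult[of pxy d q2 "\<lambda>_ _. 1"] d_rows by (simp add: sum_sum_mult_row_eq_0)
  moreover have "(\<Sum>x\<in>UNIV. \<Sum>t\<in>UNIV. px pxy x * d x t) = 0"
    using sum_sum_mult_row_eq_0[of d "px pxy", OF d_rows] by (simp add: mult.commute)
  ultimately show ?thesis
    unfolding sum_sum_pyt_mult sum_sum_pt1t2_mult IB_grad1_def
    by (simp add: algebra_simps sum.distrib sum_subtractf sum_distrib_left)
qed

lemma IB_grad1_eq_of_minimiser:
  fixes pxy :: "'x::finite \<Rightarrow> 'y::finite \<Rightarrow> real"
    and q1 :: "'x \<Rightarrow> 't1::finite \<Rightarrow> real" and q2 :: "'x \<Rightarrow> 't2::finite \<Rightarrow> real"
  assumes pxy_nonneg: "\<forall>x y. 0 \<le> pxy x y"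
    and q1_cd: "cond_dist q1"
    and q1_pos: "\<forall>x t1. q1 x t1 > 0" and q2_pos: "\<forall>x t2. q2 x t2 > 0"
    and optimal: "\<forall>r1 :: 'x \<Rightarrow> 't1 \<Rightarrow> real. cond_dist r1 \<longrightarrow>
      IB_F pxy beta lam gam q1 q2 \<le> IB_F pxy beta lam gam r1 q2"
  shows "IB_grad1 pxy beta gam q1 q2 x0 a = IB_grad1 pxy beta gam q1 q2 x0 b"
proof -
  define e :: "'t1 \<Rightarrow> real" where "e t = (if t = a then 1 else 0) - (if t = b then 1 else 0)" for t
  define d where "d x t = (if x = x0 then e t else 0)" for x t
  define \<delta> where "\<delta> = min (q1 x0 a) (q1 x0 b)"
  have d_rows: "(\<Sum>t\<in>UNIV. d x t) = 0" for x
    unfolding d_def e_def by (cases "x = x0") (simp_all add: sum_subtractf)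
  have "cond_dist (\<lambda>x t. q1 x t + s * d x t)" if "\<bar>s\<bar> < \<delta>" for s
    unfolding cond_dist_def
  proof (intro allI conjI)
    fix x t
    show "0 \<le> q1 x t + s * d x t"
      using that q1_pos[rule_format, of x t] unfolding d_def e_def \<delta>_def
      by (cases "x = x0"; cases "t = a"; cases "t = b") auto
    show "(\<Sum>t\<in>UNIV. q1 x t + s * d x t) = 1"
      using q1_cd d_rows[of x] unfolding cond_dist_def by (simp add: sum.distrib flip: sum_distrib_left)
  qed
  then have "\<forall>s. \<bar>0 - s\<bar> < \<delta> \<longrightarrow>
      IB_F pxy beta lam gam (\<lambda>x t. q1 x t + 0 * d x t) q2
        \<le> IB_F pxy beta lam gam (\<lambda>x t. q1 x t + s * d x t) q2"
    using optimal by auto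
  moreover have "\<delta> > 0"
    unfolding \<delta>_def using q1_pos by simp
  ultimately have "(\<Sum>x\<in>UNIV. \<Sum>t\<in>UNIV. d x t * IB_grad1 pxy beta gam q1 q2 x t) = 0"
    by (intro DERIV_local_min[OF
          IB_F_has_directional_derivative_q1[where d = d, OF pxy_nonneg q1_pos q2_pos d_rows]])
  moreover have "(\<Sum>x\<in>UNIV. \<Sum>t\<in>UNIV. d x t * g x t) = g x0 a - g x0 b" for g :: "'x \<Rightarrow> 't1 \<Rightarrow> real"
    unfolding d_def e_def
    by (subst sum.swap) (simp add: left_diff_distrib sum_subtractf if_distrib[of "\<lambda>u. u * _"] cong: if_cong)
  ultimately show ?thesis
    by simp
qed

section \<open>The self-consistent equation for the first encoder\<close>

lemma eq_gibbs_of_proportional: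
  fixes q p E :: "'t::finite \<Rightarrow> real"
  assumes "(\<Sum>t\<in>UNIV. q t) = 1" and "\<And>t. q t = p t * exp (E t) * c"
  shows "q t = p t * exp (E t) / (\<Sum>t\<in>UNIV. p t * exp (E t))"
proof -
  have "(\<Sum>t\<in>UNIV. p t * exp (E t)) * c = 1"
    using assms by (simp flip: sum_distrib_right)
  moreover from this have "(\<Sum>t\<in>UNIV. p t * exp (E t)) \<noteq> 0"
    by auto
  ultimately have "c = 1 / (\<Sum>t\<in>UNIV. p t * exp (E t))"
    by (simp add: field_simps)
  then show ?thesis
    using assms(2)[of t] by simp
qed

locale positive_channels =
  fixes pxy :: "'x::finite \<Rightarrow> 'y::finite \<Rightarrow> real"
    and q1 :: "'x \<Rightarrow> 't1::finite \<Rightarrow> real" and q2 :: "'x \<Rightarrow> 't2::finite \<Rightarrow> real"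
  assumes pxy_nonneg: "\<forall>x y. 0 \<le> pxy x y" and px_pos: "\<forall>x. 0 < px pxy x"
    and q1_cd: "cond_dist q1" and q2_cd: "cond_dist q2"
    and q1_pos: "\<forall>x t1. 0 < q1 x t1" and q2_pos: "\<forall>x t2. 0 < q2 x t2"
begin

lemma q1_sum: "(\<Sum>t\<in>UNIV. q1 x t) = 1" and q2_sum: "(\<Sum>t\<in>UNIV. q2 x t) = 1"
  using q1_cd q2_cd unfolding cond_dist_def by simp_all

lemma pt1_pos: "0 < pt pxy q1 t1" and pt2_pos: "0 < pt pxy q2 t2"
  unfolding pt_def using px_pos q1_pos q2_pos by (auto intro!: sum_pos)

lemma pt1t2_pos: "0 < pt1t2 pxy q1 q2 t1 t2"
  unfolding pt1t2_def using px_pos q1_pos q2_pos by (auto intro!: sum_pos)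

lemma pyt_pos: "0 < pxy x y \<Longrightarrow> 0 < pyt pxy q1 q2 y t"
  unfolding pyt_def using pxy_nonneg q1_pos q2_pos by (intro sum_pos2[of _ x]) (auto simp: less_imp_le)

lemma sum_pt1t2_right: "(\<Sum>t2\<in>UNIV. pt1t2 pxy q1 q2 t1 t2) = pt pxy q1 t1"
  unfolding pt1t2_def pt_def by (subst sum.swap) (simp add: q2_sum flip: sum_distrib_left)

lemma sum_pt1t2_left: "(\<Sum>t1\<in>UNIV. pt1t2 pxy q1 q2 t1 t2) = pt pxy q2 t2"
  unfolding pt1t2_def pt_def
  by (subst sum.swap) (simp add: q1_sum mult.assoc flip: sum_distrib_left sum_distrib_right)

lemma sum_pyt_left: "(\<Sum>y\<in>UNIV. pyt pxy q1 q2 y (t1, t2)) = pt1t2 pxy q1 q2 t1 t2"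
  unfolding pyt_def pt1t2_def px_def by (subst sum.swap) (simp add: sum_distrib_right)

lemma pmi_px_q1: "pmi (\<lambda>x t. px pxy x * q1 x t) x t1 = ln (q1 x t1) - ln (pt pxy q1 t1)"
proof -
  have "(\<Sum>t\<in>UNIV. px pxy x * q1 x t) = px pxy x"
    by (simp add: q1_sum flip: sum_distrib_left)
  then show ?thesis
    unfolding pmi_def pt_def[symmetric] using px_pos q1_pos pt1_pos by (simp add: ln_div ln_mult less_imp_neq[symmetric])
qed

lemma pmi_pt1t2:
  "pmi (pt1t2 pxy q1 q2) t1 t2 = ln (pt1t2 pxy q1 q2 t1 t2) - ln (pt pxy q1 t1) - ln (pt pxy q2 t2)"
  unfolding pmi_def sum_pt1t2_right sum_pt1t2_left
  using pt1t2_pos pt1_pos pt2_pos by (simp add: ln_div ln_mult less_imp_neq[symmetric])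

lemma pmi_pyt:
  assumes "0 < pyt pxy q1 q2 y (t1, t2)"
  shows "pmi (pyt pxy q1 q2) y (t1, t2) = ln (pyt pxy q1 q2 y (t1, t2))
      - ln (\<Sum>t\<in>UNIV. pyt pxy q1 q2 y t) - ln (pt1t2 pxy q1 q2 t1 t2)"
proof -
  have "pyt pxy q1 q2 y (t1, t2) \<le> (\<Sum>t\<in>UNIV. pyt pxy q1 q2 y t)"
    by (rule member_le_sum) (auto intro: pyt_nonneg[OF pxy_nonneg q1_pos q2_pos])
  then show ?thesis
    unfolding pmi_def sum_pyt_left using assms pt1t2_pos by (simp add: ln_div ln_mult less_imp_neq[symmetric])
qed

lemma px_mult_KL_pt2_t1:
  "px pxy x * KL (q2 x) (pt2_t1 pxy q1 q2 t1) = (\<Sum>t2\<in>UNIV. px pxy x * q2 x t2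
      * (ln (q2 x t2) - ln (pt1t2 pxy q1 q2 t1 t2) + ln (pt pxy q1 t1)))"
  unfolding KL_eq_sum pt2_t1_def sum_distrib_left
proof (intro sum.cong refl)
  fix t2
  have "0 < q2 x t2" using q2_pos by simp
  then show "px pxy x * (q2 x t2 * ln (q2 x t2 / (pt1t2 pxy q1 q2 t1 t2 / pt pxy q1 t1))) = px pxy x * q2 x t2
      * (ln (q2 x t2) - ln (pt1t2 pxy q1 q2 t1 t2) + ln (pt pxy q1 t1))"
    using pt1t2_pos[of t1 t2] pt1_pos[of t1] by (simp add: ln_div ln_mult)
qed

lemma px_mult_KL_py_t1t2:
  "px pxy x * KL (py_x pxy x) (py_t1t2 pxy q1 q2 t1 t2) = (\<Sum>y\<in>UNIV. pxy x y
      * (ln (py_x pxy x y) - ln (pyt pxy q1 q2 y (t1, t2)) + ln (pt1t2 pxy q1 q2 t1 t2)))"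
  unfolding KL_eq_sum sum_distrib_left
proof (intro sum.cong refl)
  fix y
  show "px pxy x * (py_x pxy x y * ln (py_x pxy x y / py_t1t2 pxy q1 q2 t1 t2 y)) = pxy x y
      * (ln (py_x pxy x y) - ln (pyt pxy q1 q2 y (t1, t2)) + ln (pt1t2 pxy q1 q2 t1 t2))"
  proof (cases "pxy x y = 0")
    case False
    then have "0 < pxy x y" using pxy_nonneg by (simp add: order_less_le)
    then show ?thesis
      unfolding py_x_def py_t1t2_def using px_pos pyt_pos pt1t2_pos by (simp add: ln_div ln_mult less_imp_neq[symmetric])
  qed (simp add: py_x_def)
qed

lemma IB_grad1_expand:
  "IB_grad1 pxy beta gam q1 q2 x t1 =
     - (\<Sum>y\<in>UNIV. \<Sum>t2\<in>UNIV. pxy x y * q2 x t2 * (ln (pyt pxy q1 q2 y (t1, t2))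
          - ln (\<Sum>t\<in>UNIV. pyt pxy q1 q2 y t) - ln (pt1t2 pxy q1 q2 t1 t2)))
     + beta * (px pxy x * (ln (q1 x t1) - ln (pt pxy q1 t1)))
     + gam * (\<Sum>t2\<in>UNIV. px pxy x * q2 x t2
          * (ln (pt1t2 pxy q1 q2 t1 t2) - ln (pt pxy q1 t1) - ln (pt pxy q2 t2)))"
proof -
  have pyt_term: "pxy x y * q2 x t2 * pmi (pyt pxy q1 q2) y (t1, t2) = pxy x y * q2 x t2 * (ln (pyt pxy q1 q2 y (t1, t2))
      - ln (\<Sum>t\<in>UNIV. pyt pxy q1 q2 y t) - ln (pt1t2 pxy q1 q2 t1 t2))" for y t2
  proof (cases "pxy x y = 0")
    case False
    then have "0 < pxy x y" using pxy_nonneg by (simp add: order_less_le)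
    then show ?thesis by (simp add: pmi_pyt pyt_pos)
  qed simp
  show ?thesis
    unfolding IB_grad1_def pmi_px_q1 pmi_pt1t2 pyt_term by simp
qed

lemma px_mult_E1:
  assumes "0 < beta"
  shows "px pxy x * (beta * E1 pxy beta gam q1 q2 x t1) =
     gam * (\<Sum>t2\<in>UNIV. px pxy x * q2 x t2
          * (ln (q2 x t2) - ln (pt1t2 pxy q1 q2 t1 t2) + ln (pt pxy q1 t1)))
     - (\<Sum>t2\<in>UNIV. q2 x t2 * (\<Sum>y\<in>UNIV. pxy x y
          * (ln (py_x pxy x y) - ln (pyt pxy q1 q2 y (t1, t2)) + ln (pt1t2 pxy q1 q2 t1 t2))))"
proof -
  have "px pxy x * (beta * E1 pxy beta gam q1 q2 x t1) = gam * (px pxy x * KL (q2 x) (pt2_t1 pxy q1 q2 t1))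
      - (\<Sum>t2\<in>UNIV. q2 x t2 * (px pxy x * KL (py_x pxy x) (py_t1t2 pxy q1 q2 t1 t2)))"
    unfolding E1_def using assms by (simp add: field_simps sum_distrib_left)
  then show ?thesis
    unfolding px_mult_KL_pt2_t1 px_mult_KL_py_t1t2 .
qed

lemma IB_grad1_eq_E1:
  assumes "0 < beta"
  shows "\<exists>K. \<forall>t1. IB_grad1 pxy beta gam q1 q2 x t1
     = beta * px pxy x * (ln (q1 x t1) - ln (pt pxy q1 t1) - E1 pxy beta gam q1 q2 x t1) + K"
proof (intro exI allI)
  fix t1
  let ?R = "\<lambda>y. ln (\<Sum>t\<in>UNIV. pyt pxy q1 q2 y t)"
  let ?L = "\<lambda>y t2. ln (pyt pxy q1 q2 y (t1, t2))" and ?P = "\<lambda>t2. ln (pt1t2 pxy q1 q2 t1 t2)"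
  have Y: "(\<Sum>y\<in>UNIV. \<Sum>t2\<in>UNIV. pxy x y * q2 x t2 * (?L y t2 - ?R y - ?P t2))
      + (\<Sum>t2\<in>UNIV. q2 x t2 * (\<Sum>y\<in>UNIV. pxy x y * (ln (py_x pxy x y) - ?L y t2 + ?P t2)))
      = (\<Sum>y\<in>UNIV. pxy x y * (ln (py_x pxy x y) - ?R y))"
  proof -
    have swap: "(\<Sum>t2\<in>UNIV. q2 x t2 * (\<Sum>y\<in>UNIV. pxy x y * (ln (py_x pxy x y) - ?L y t2 + ?P t2)))
        = (\<Sum>y\<in>UNIV. \<Sum>t2\<in>UNIV. pxy x y * q2 x t2 * (ln (py_x pxy x y) - ?L y t2 + ?P t2))"
      by (subst sum.swap) (simp add: sum_distrib_left mult_ac)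
    have "(\<Sum>y\<in>UNIV. \<Sum>t2\<in>UNIV. pxy x y * q2 x t2 * (?L y t2 - ?R y - ?P t2))
      + (\<Sum>t2\<in>UNIV. q2 x t2 * (\<Sum>y\<in>UNIV. pxy x y * (ln (py_x pxy x y) - ?L y t2 + ?P t2)))
      = (\<Sum>y\<in>UNIV. \<Sum>t2\<in>UNIV. pxy x y * q2 x t2 * (ln (py_x pxy x y) - ?R y))"
      unfolding swap sum.distrib[symmetric] by (intro sum.cong refl) (simp add: algebra_simps)
    also have "\<dots> = (\<Sum>y\<in>UNIV. (\<Sum>t2\<in>UNIV. q2 x t2) * (pxy x y * (ln (py_x pxy x y) - ?R y)))"
      by (intro sum.cong refl) (subst sum_distrib_right, simp add: mult_ac)
    finally show ?thesis
      by (simp add: q2_sum)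
  qed
  have G: "(\<Sum>t2\<in>UNIV. px pxy x * q2 x t2 * (?P t2 - ln (pt pxy q1 t1) - ln (pt pxy q2 t2)))
      + (\<Sum>t2\<in>UNIV. px pxy x * q2 x t2 * (ln (q2 x t2) - ?P t2 + ln (pt pxy q1 t1)))
      = (\<Sum>t2\<in>UNIV. px pxy x * q2 x t2 * (ln (q2 x t2) - ln (pt pxy q2 t2)))"
    by (simp add: algebra_simps flip: sum.distrib)
  show "IB_grad1 pxy beta gam q1 q2 x t1
     = beta * px pxy x * (ln (q1 x t1) - ln (pt pxy q1 t1) - E1 pxy beta gam q1 q2 x t1)
       + (gam * (\<Sum>t2\<in>UNIV. px pxy x * q2 x t2 * (ln (q2 x t2) - ln (pt pxy q2 t2)))
          - (\<Sum>y\<in>UNIV. pxy x y * (ln (py_x pxy x y) - ?R y)))"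
    unfolding IB_grad1_expand G[symmetric] Y[symmetric] using px_mult_E1[OF assms, of x gam t1]
    by (simp add: algebra_simps)
qed

lemma minimiser_gibbs_q1:
  assumes beta_pos: "0 < beta"
    and optimal: "\<forall>r1 :: 'x \<Rightarrow> 't1 \<Rightarrow> real. cond_dist r1 \<longrightarrow>
      IB_F pxy beta lam gam q1 q2 \<le> IB_F pxy beta lam gam r1 q2"
  shows "q1 x t1 = pt pxy q1 t1 * exp (E1 pxy beta gam q1 q2 x t1)
      / (\<Sum>t\<in>UNIV. pt pxy q1 t * exp (E1 pxy beta gam q1 q2 x t))"
proof -
  define L where "L t = ln (q1 x t) - ln (pt pxy q1 t) - E1 pxy beta gam q1 q2 x t" for t
  obtain K where K: "\<forall>t. IB_grad1 pxy beta gam q1 q2 x t = beta * px pxy x * L t + K"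
    using IB_grad1_eq_E1[OF beta_pos, where x = x and gam = gam] unfolding L_def by blast
  have "beta * px pxy x * L t = beta * px pxy x * L t1" for t
    using IB_grad1_eq_of_minimiser[OF pxy_nonneg q1_cd q1_pos q2_pos optimal, of x t t1] K by simp
  then have L_const: "L t = L t1" for t
    using beta_pos px_pos[rule_format, of x] by simp
  have "q1 x t = pt pxy q1 t * exp (E1 pxy beta gam q1 q2 x t) * exp (L t)" for t
    using q1_pos pt1_pos[of t] unfolding L_def by (simp add: exp_diff)
  then have "q1 x t = pt pxy q1 t * exp (E1 pxy beta gam q1 q2 x t) * exp (L t1)" for t
    using L_const[of t] by simp
  then show ?thesis
    by (rule eq_gibbs_of_proportional[OF q1_sum])
qed

end

section \<open>Exchanging the encoders\<close>

lemma mutual_info_transpose: "mutual_info (\<lambda>a b. J b a) = mutual_info J"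
  unfolding mutual_info_def by (subst sum.swap) (simp add: mult.commute cong: if_cong)

lemma mutual_info_swap_pairs:
  fixes J :: "'y::finite \<Rightarrow> ('a::finite \<times> 'b::finite) \<Rightarrow> real"
  shows "mutual_info (\<lambda>y t. J y (prod.swap t)) = mutual_info J"
proof -
  have swap: "(\<Sum>t\<in>UNIV. f (prod.swap t)) = (\<Sum>t\<in>UNIV. f t)" for f :: "'a \<times> 'b \<Rightarrow> real"
    using sum.reindex_bij_betw[of prod.swap UNIV UNIV f] bij_swap by simp
  show ?thesis
    unfolding mutual_info_eq_sum_pmi pmi_def swap by (subst swap) (rule refl)
qed

lemma IB_F_swap: "IB_F pxy beta lam gam q1 q2 = IB_F pxy lam beta gam q2 q1"
proof -
  have pyt: "pyt pxy q2 q1 = (\<lambda>y t. pyt pxy q1 q2 y (prod.swap t))"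
    unfolding pyt_def by (intro ext) (simp add: mult_ac)
  have pt1t2: "pt1t2 pxy q2 q1 = (\<lambda>a b. pt1t2 pxy q1 q2 b a)"
    unfolding pt1t2_def by (intro ext) (simp add: mult_ac)
  show ?thesis
    unfolding IB_F_def pyt pt1t2 mutual_info_swap_pairs[of "pyt pxy q1 q2"]
      mutual_info_transpose[of "pt1t2 pxy q1 q2"] by simp
qed

lemma E2_eq_E1_swap: "E2 pxy lam gam q1 q2 = E1 pxy lam gam q2 q1"
proof -
  have "pt1t2 pxy q2 q1 t2 t1 = pt1t2 pxy q1 q2 t1 t2" for t1 t2
    unfolding pt1t2_def by (simp add: mult_ac)
  moreover have "pyt pxy q2 q1 y (t2, t1) = pyt pxy q1 q2 y (t1, t2)" for y t1 t2
    unfolding pyt_def by (simp add: mult_ac)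
  ultimately show ?thesis
    unfolding E1_def E2_def pt2_t1_def pt1_t2_def py_t1t2_def by simp
qed

theorem theorem1:
  fixes pxy :: "'x::finite \<Rightarrow> 'y::finite \<Rightarrow> real"
    and q1 :: "'x \<Rightarrow> 't1::finite \<Rightarrow> real"
    and q2 :: "'x \<Rightarrow> 't2::finite \<Rightarrow> real"
    and beta lam gam :: real
  assumes pxy_nonneg: "\<forall>x y. 0 \<le> pxy x y"
    and pxy_sum: "(\<Sum>x\<in>UNIV. \<Sum>y\<in>UNIV. pxy x y) = 1"
    and beta_pos: "beta > 0" and lam_pos: "lam > 0" and gam_nonneg: "gam \<ge> 0"
    and q1_cd: "cond_dist q1" and q2_cd: "cond_dist q2"
    and optimal: "\<forall>r1 r2. cond_dist (r1 :: 'x \<Rightarrow> 't1 \<Rightarrow> real) \<and> cond_dist (r2 :: 'x \<Rightarrow> 't2 \<Rightarrow> real)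
                     \<longrightarrow> IB_F pxy beta lam gam q1 q2 \<le> IB_F pxy beta lam gam r1 r2"
    and px_pos: "\<forall>x. px pxy x > 0"
    and q1_pos: "\<forall>x t1. q1 x t1 > 0"
    and q2_pos: "\<forall>x t2. q2 x t2 > 0"
  shows "(\<forall>x t1. q1 x t1 =
            pt pxy q1 t1 * exp (E1 pxy beta gam q1 q2 x t1)
            / (\<Sum>t\<in>UNIV. pt pxy q1 t * exp (E1 pxy beta gam q1 q2 x t)))
       \<and> (\<forall>x t2. q2 x t2 =
            pt pxy q2 t2 * exp (E2 pxy lam gam q1 q2 x t2)
            / (\<Sum>t\<in>UNIV. pt pxy q2 t * exp (E2 pxy lam gam q1 q2 x t)))"
proof -
  interpret positive_channels pxy q1 q2
    using pxy_nonneg px_pos q1_cd q2_cd q1_pos q2_pos by unfold_locales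
  interpret swapped: positive_channels pxy q2 q1
    using pxy_nonneg px_pos q1_cd q2_cd q1_pos q2_pos by unfold_locales
  have "\<forall>r1 :: 'x \<Rightarrow> 't1 \<Rightarrow> real. cond_dist r1 \<longrightarrow>
      IB_F pxy beta lam gam q1 q2 \<le> IB_F pxy beta lam gam r1 q2"
    using optimal q2_cd by blast
  moreover have "\<forall>r2 :: 'x \<Rightarrow> 't2 \<Rightarrow> real. cond_dist r2 \<longrightarrow>
      IB_F pxy lam beta gam q2 q1 \<le> IB_F pxy lam beta gam r2 q1"
    using optimal q1_cd by (metis IB_F_swap)
  ultimately show ?thesis
    unfolding E2_eq_E1_swap
    using minimiser_gibbs_q1[OF beta_pos] swapped.minimiser_gibbs_q1[OF lam_pos] by simp
qed

end
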